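(* Let $i,j\ge0$ be real numbers with $i+j=1$, and let $\mathbf{x}\in\mathrm{Bad}(i,j)$. Then the Hausdorff dimension of $\mathrm{Bad}^{\mathbf{x}}(i,j)$ equals $2$.
   Context: $\|\cdot\|$ denotes the distance to the nearest integer. Convention: if $i=0$ then $\|y\|^{1/i}:=0$ (and likewise for $j$). A vector $\mathbf{x}=(x_1,x_2)$ is irrational if $1,x_1,x_2$ are linearly independent over $\mathbb{Q}$. $\mathrm{Bad}(i,j)$ is the set of irrational $\mathbf{x}\in[0,1]^2$ for which there is a constant $c(\mathbf{x})>0$ with $\max\{\|qx_1\|^{1/i},\|qx_2\|^{1/j}\}>c(\mathbf{x})/q$ for all $q\in\mathbb{N}$. For irrational $\mathbf{x}\in[0,1]^2$, $\mathrm{Bad}^{\mathbf{x}}(i,j)$ is the set of $\boldsymbol\gamma=(\gamma_1,\gamma_2)\in[0,1]^2$ for which there exists $c(\boldsymbol\gamma)>0$ such that $\max\{\|qx_1-\gamma_1\|^{1/i},\|qx_2-\gamma_2\|^{1/j}\}>c(\boldsymbol\gamma)/|q|$ for all nonzero integers $q$. *)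

theory Defs
  imports "HOL-Analysis.Analysis"
begin

definition dist_int :: "real \<Rightarrow> real" where
  "dist_int y = \<bar>y - of_int (round y)\<bar>"

definition wpow :: "real \<Rightarrow> real \<Rightarrow> real" where
  "wpow y i = (if i = 0 then 0 else dist_int y powr (1 / i))"

definition irrational_vec :: "real \<times> real \<Rightarrow> bool" where
  "irrational_vec x \<longleftrightarrow>
     (\<forall>a b c. a \<in> \<rat> \<and> b \<in> \<rat> \<and> c \<in> \<rat> \<and> a + b * fst x + c * snd x = 0
        \<longrightarrow> a = 0 \<and> b = 0 \<and> c = 0)"

definition unit_square :: "(real \<times> real) set" where
  "unit_square = {0..1} \<times> {0..1}"

definition Bad :: "real \<Rightarrow> real \<Rightarrow> (real \<times> real) set" where
  "Bad i j = {x \<in> unit_square. irrational_vec x \<and>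
      (\<exists>c>0. \<forall>q::nat. q \<ge> 1 \<longrightarrow>
         max (wpow (real q * fst x) i) (wpow (real q * snd x) j) > c / real q)}"

definition Bad_inhom :: "real \<times> real \<Rightarrow> real \<Rightarrow> real \<Rightarrow> (real \<times> real) set" where
  "Bad_inhom x i j = {\<gamma> \<in> unit_square.
      (\<exists>c>0. \<forall>q::int. q \<noteq> 0 \<longrightarrow>
         max (wpow (real_of_int q * fst x - fst \<gamma>) i) (wpow (real_of_int q * snd x - snd \<gamma>) j)
           > c / \<bar>real_of_int q\<bar>)}"

definition cover_sum :: "real \<Rightarrow> (nat \<Rightarrow> 'a::metric_space set) \<Rightarrow> ennreal" where
  "cover_sum s U = (\<Sum>n. (if U n = {} then 0
        else if s = 0 then 1 else ennreal (diameter (U n) powr s)))"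

definition hausdorff_pre :: "real \<Rightarrow> real \<Rightarrow> 'a::metric_space set \<Rightarrow> ennreal" where
  "hausdorff_pre s \<delta> A = (INF U \<in> {U. A \<subseteq> (\<Union>n. U n) \<and>
        (\<forall>n. bounded (U n) \<and> diameter (U n) \<le> \<delta>)}. cover_sum s U)"

definition hausdorff_measure :: "real \<Rightarrow> 'a::metric_space set \<Rightarrow> ennreal" where
  "hausdorff_measure s A = (SUP \<delta> \<in> {0<..}. hausdorff_pre s \<delta> A)"

definition hausdorff_dim :: "'a::metric_space set \<Rightarrow> ereal" where
  "hausdorff_dim A = Inf (ereal ` {s. s \<ge> 0 \<and> hausdorff_measure s A = 0})"

end

theory Submission
  imports Defs
begin

text \<open>
  Upper bound: Bad^x(i,j) lies in the unit square, and covering the square by the n^2 grid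
  squares of side 1/n shows that its s-dimensional Hausdorff measure vanishes for every s > 2.

  Lower bound: for s < 2 we exhibit a Cantor-type subset of positive s-dimensional measure.
  Fix a base N and refine the N-adic grid level by level; a locale describes a construction
  that keeps M "good" children out of the N^2 children of every kept cell.  A counting form of
  the mass distribution principle shows that the limit set has positive H^s measure whenever
  N^s \<le> M.  For the number theory, denominators q are sorted into levels according to the
  size of (c/|q|)^max(i,j); because x is badly approximable, a level-L cell meets the
  resonant set of at most one level-(L+1) denominator, and that resonant set meets at most 3N
  of its children.  Keeping the remaining N^2 - 3N children gives a limit set inside
  Bad^x(i,j), and N^s \<le> N^2 - 3N holds for N large.
\<close>

definition adic_interval :: "nat \<Rightarrow> nat \<Rightarrow> nat \<Rightarrow> real set" where
  "adic_interval N L a = {real a / real N ^ L .. (real a + 1) / real N ^ L}"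

definition cell :: "nat \<Rightarrow> nat \<Rightarrow> nat \<times> nat \<Rightarrow> (real \<times> real) set" where
  "cell N L P = adic_interval N L (fst P) \<times> adic_interval N L (snd P)"

definition grid :: "nat \<Rightarrow> nat \<Rightarrow> (nat \<times> nat) set" where
  "grid N L = {..<N ^ L} \<times> {..<N ^ L}"

definition children :: "nat \<Rightarrow> nat \<times> nat \<Rightarrow> (nat \<times> nat) set" where
  "children N P = {N * fst P ..< N * fst P + N} \<times> {N * snd P ..< N * snd P + N}"

definition ancestor :: "nat \<Rightarrow> nat \<Rightarrow> nat \<times> nat \<Rightarrow> nat \<times> nat" where
  "ancestor N k P = (fst P div N ^ k, snd P div N ^ k)"

lemma adic_interval_iff:
  assumes "N \<ge> 1"
  shows "y \<in> adic_interval N L a \<longleftrightarrow> real a \<le> y * real N ^ L \<and> y * real N ^ L \<le> real a + 1"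
  using assms by (simp add: adic_interval_def field_simps)

lemma adic_interval_div_subset:
  assumes N: "N \<ge> 1"
  shows "adic_interval N (L + k) a \<subseteq> adic_interval N L (a div N ^ k)"
proof
  fix y assume "y \<in> adic_interval N (L + k) a"
  define K where "K = N ^ k"
  define t where "t = y * real N ^ L"
  have K: "real K > 0" using N by (simp add: K_def)
  have t: "real a \<le> t * real K" "t * real K \<le> real a + 1"
    using \<open>y \<in> adic_interval N (L + k) a\<close> adic_interval_iff[OF N]
    unfolding t_def K_def by (auto simp: power_add mult.assoc)
  have "K * (a div K) \<le> a" by simp
  hence "real (a div K) * real K \<le> t * real K" using t(1) by (metis mult.commute of_nat_le_iff of_nat_mult order_trans)
  hence lo: "real (a div K) \<le> t" using K by simp
  have "a = K * (a div K) + a mod K" "a mod K < K" using K by simp_all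
  hence "a + 1 \<le> K * (a div K + 1)" by (simp only: distrib_left)
  hence "t * real K \<le> (real (a div K) + 1) * real K" using t(2)
    by (metis mult.commute of_nat_1 of_nat_add of_nat_le_iff of_nat_mult order_trans)
  hence hi: "t \<le> real (a div K) + 1" using K by simp
  show "y \<in> adic_interval N L (a div N ^ k)"
    using lo hi adic_interval_iff[OF N] unfolding t_def K_def by simp
qed

lemma cell_ancestor_subset:
  assumes "N \<ge> 1"
  shows "cell N (L + k) P \<subseteq> cell N L (ancestor N k P)"
  using adic_interval_div_subset[OF assms] unfolding cell_def ancestor_def by (simp add: Sigma_mono)

lemma children_grid:
  assumes "P \<in> grid N L"
  shows "children N P \<subseteq> grid N (Suc L)"
proof -
  have "N * a + N \<le> N ^ Suc L" if "a < N ^ L" for a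
    using mult_le_mono2[of "Suc a" "N ^ L" N] that by simp
  thus ?thesis using assms unfolding children_def grid_def by (fastforce simp: mem_Times_iff)
qed

lemma ancestor_children:
  assumes "N > 0" "Q \<in> children N P"
  shows "ancestor N 1 Q = P"
proof -
  have "b div N = a" if "N * a \<le> b" "b < N * a + N" for a b
    using that assms(1) by (simp add: div_nat_eqI mult.commute)
  thus ?thesis using assms(2) unfolding children_def ancestor_def by (auto simp: mem_Times_iff prod_eq_iff)
qed

lemma ancestor_0 [simp]: "ancestor N 0 Q = Q"
  by (simp add: ancestor_def)

lemma ancestor_Suc: "ancestor N (Suc k) Q = ancestor N k (ancestor N 1 Q)"
  by (simp add: ancestor_def div_mult2_eq mult.commute)

lemma finite_children: "finite (children N P)"
  by (simp add: children_def)

lemma card_children: "card (children N P) = N * N"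
  by (simp add: children_def card_cartesian_product)

lemma compact_cell: "compact (cell N L P)"
  unfolding cell_def adic_interval_def by (intro compact_Times compact_Icc)

lemma cell_nonempty: "cell N L P \<noteq> {}"
  unfolding cell_def adic_interval_def by (auto simp: divide_right_mono)

lemma cell_root: "cell N 0 (0, 0) = unit_square"
  by (simp add: cell_def adic_interval_def unit_square_def)

lemma adic_interval_width:
  assumes "u \<in> adic_interval N L a" "v \<in> adic_interval N L a"
  shows "\<bar>u - v\<bar> \<le> 1 / real N ^ L"
proof -
  have "(real a + 1) / real N ^ L - real a / real N ^ L = 1 / real N ^ L"
    by (simp add: diff_divide_distrib[symmetric])
  thus ?thesis using assms unfolding adic_interval_def by auto
qed

lemma cell_diameter:
  shows "diameter (cell N L P) \<le> 2 / real N ^ L"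
proof (rule diameter_le)
  fix p q assume pq: "p \<in> cell N L P" "q \<in> cell N L P"
  have "norm (p - q) \<le> \<bar>fst p - fst q\<bar> + \<bar>snd p - snd q\<bar>"
    using norm_Pair_le[of "fst p - fst q" "snd p - snd q"] by (cases p, cases q) simp
  also have "\<dots> \<le> 2 / real N ^ L"
  proof -
    have "\<bar>fst p - fst q\<bar> \<le> 1 / real N ^ L" "\<bar>snd p - snd q\<bar> \<le> 1 / real N ^ L"
      using pq by (auto simp: cell_def intro: adic_interval_width)
    thus ?thesis by simp
  qed
  finally show "norm (p - q) \<le> 2 / real N ^ L" .
qed simp

lemma nat_interval_card:
  assumes "w \<ge> 0"
  shows "finite {a::nat. lo \<le> real a \<and> real a \<le> lo + w}"
    "card {a::nat. lo \<le> real a \<and> real a \<le> lo + w} \<le> nat \<lfloor>w\<rfloor> + 1"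
proof -
  define n0 where "n0 = nat \<lceil>lo\<rceil>"
  have n0: "lo \<le> real n0" unfolding n0_def by linarith
  have sub: "{a::nat. lo \<le> real a \<and> real a \<le> lo + w} \<subseteq> {n0 .. n0 + nat \<lfloor>w\<rfloor>}"
  proof
    fix a assume a: "a \<in> {a::nat. lo \<le> real a \<and> real a \<le> lo + w}"
    hence "n0 \<le> a" unfolding n0_def by (auto simp: nat_le_iff ceiling_le_iff)
    moreover have "real a - real n0 \<le> w" using a n0 by auto
    hence "int a - int n0 \<le> \<lfloor>w\<rfloor>" by (simp add: le_floor_iff)
    ultimately show "a \<in> {n0 .. n0 + nat \<lfloor>w\<rfloor>}" by auto
  qed
  show "finite {a::nat. lo \<le> real a \<and> real a \<le> lo + w}" by (rule finite_subset[OF sub]) simp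
  show "card {a::nat. lo \<le> real a \<and> real a \<le> lo + w} \<le> nat \<lfloor>w\<rfloor> + 1"
    using card_mono[OF _ sub] by simp
qed

lemma adic_intervals_near_card:
  assumes N: "N \<ge> 1" and d: "0 \<le> d" "d * real N ^ L \<le> real N"
  shows "finite {a. \<exists>y\<in>adic_interval N L a. \<bar>y - z\<bar> \<le> d}"
    "card {a. \<exists>y\<in>adic_interval N L a. \<bar>y - z\<bar> \<le> d} \<le> 2 * N + 2"
proof -
  define T where "T = real N ^ L"
  define w where "w = 2 * T * d + 1"
  have T: "T > 0" using N by (simp add: T_def)
  have sub: "{a. \<exists>y\<in>adic_interval N L a. \<bar>y - z\<bar> \<le> d}
      \<subseteq> {a::nat. T * (z - d) - 1 \<le> real a \<and> real a \<le> T * (z - d) - 1 + w}"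
  proof safe
    fix a y assume y: "y \<in> adic_interval N L a" "\<bar>y - z\<bar> \<le> d"
    have "real a \<le> T * y" "T * y \<le> real a + 1" using y(1) adic_interval_iff[OF N] unfolding T_def by (auto simp: mult.commute)
    moreover have "T * (y - z) \<le> T * d" "T * (z - y) \<le> T * d"
      using y(2) T by (intro mult_left_mono; linarith)+
    ultimately show "T * (z - d) - 1 \<le> real a" "real a \<le> T * (z - d) - 1 + w"
      unfolding w_def by (auto simp: algebra_simps)
  qed
  have w: "w \<ge> 0" using T d by (simp add: w_def)
  have "w \<le> real (2 * N + 1)" using d(2) by (simp add: w_def T_def mult.commute)
  hence "nat \<lfloor>w\<rfloor> + 1 \<le> 2 * N + 2" by linarith
  thus "card {a. \<exists>y\<in>adic_interval N L a. \<bar>y - z\<bar> \<le> d} \<le> 2 * N + 2"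
    using card_mono[OF nat_interval_card(1)[OF w] sub] nat_interval_card(2)[OF w, of "T * (z - d) - 1"] by linarith
  show "finite {a. \<exists>y\<in>adic_interval N L a. \<bar>y - z\<bar> \<le> d}"
    by (rule finite_subset[OF sub nat_interval_card(1)[OF w]])
qed

lemma cells_meeting_card:
  assumes N: "N \<ge> 1" and v0: "v0 \<in> V" and V: "\<And>v. v \<in> V \<Longrightarrow> dist v v0 \<le> d"
    and d: "0 \<le> d" "d * real N ^ L \<le> real N"
  shows "finite {P. cell N L P \<inter> V \<noteq> {}}" "card {P. cell N L P \<inter> V \<noteq> {}} \<le> (2 * N + 2) ^ 2"
proof -
  define A where "A z = {a. \<exists>y\<in>adic_interval N L a. \<bar>y - z\<bar> \<le> d}" for z
  have sub: "{P. cell N L P \<inter> V \<noteq> {}} \<subseteq> A (fst v0) \<times> A (snd v0)"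
  proof
    fix P assume "P \<in> {P. cell N L P \<inter> V \<noteq> {}}"
    then obtain p where p: "p \<in> cell N L P" "p \<in> V" by blast
    have "\<bar>fst p - fst v0\<bar> \<le> d" "\<bar>snd p - snd v0\<bar> \<le> d"
      using dist_fst_le[of p v0] dist_snd_le[of p v0] V[OF p(2)] by (auto simp: dist_real_def)
    thus "P \<in> A (fst v0) \<times> A (snd v0)" using p(1) unfolding A_def cell_def by (auto simp: mem_Times_iff)
  qed
  have fin: "finite (A z)" and card: "card (A z) \<le> 2 * N + 2" for z
    using adic_intervals_near_card[OF N d] unfolding A_def by auto
  show "finite {P. cell N L P \<inter> V \<noteq> {}}" using sub fin[of "fst v0"] fin[of "snd v0"] by (rule finite_subset[OF _ finite_cartesian_product])
  have "card {P. cell N L P \<inter> V \<noteq> {}} \<le> card (A (fst v0)) * card (A (snd v0))"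
    using card_mono[OF _ sub] fin by (simp add: card_cartesian_product)
  also have "\<dots> \<le> (2 * N + 2) * (2 * N + 2)" using card by (intro mult_mono) auto
  also have "\<dots> = (2 * N + 2) ^ 2" by (simp only: power2_eq_square)
  finally show "card {P. cell N L P \<inter> V \<noteq> {}} \<le> (2 * N + 2) ^ 2" .
qed

lemma geometric_bracket:
  fixes b r :: real
  assumes "b > 1" "0 < r" "r \<le> 1"
  obtains L :: nat where "1 / b ^ Suc L < r" "r \<le> 1 / b ^ L"
proof -
  have ex: "\<exists>n. (1 / b) ^ n < r" using assms by (intro real_arch_pow_inv) auto
  define n where "n = (LEAST n. (1 / b) ^ n < r)"
  have n: "(1 / b) ^ n < r" unfolding n_def using ex by (rule LeastI_ex)
  then obtain L where L: "n = Suc L" using assms(3) by (cases n) auto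
  have "\<not> (1 / b) ^ L < r" using not_less_Least[of L "\<lambda>n. (1 / b) ^ n < r"] L unfolding n_def by simp
  thus ?thesis using that n L by (simp add: power_one_over)
qed

text \<open>General facts on covers: enlarging each set of a cover to an open neighbourhood changes
  its s-th power of diameter by a bounded factor plus a summable error.\<close>

lemma max_powr_le_sum: "(a::real) \<ge> 0 \<Longrightarrow> b \<ge> 0 \<Longrightarrow> max a b powr s \<le> a powr s + b powr s"
  by (cases "a \<le> b") (auto simp: max_def)

lemma enlarged_diameter_powr:
  fixes a \<rho> D s :: real
  assumes s: "0 < s" "s \<le> 2" and a: "0 \<le> a" and \<rho>: "0 < \<rho>" and D: "0 \<le> D" "D \<le> 3 * max a \<rho>"
  shows "D powr s \<le> 9 * (a powr s + \<rho> powr s)"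
proof -
  have "D powr s \<le> (3 * max a \<rho>) powr s" using D s by (intro powr_mono2) auto
  also have "\<dots> = 3 powr s * max a \<rho> powr s" using a \<rho> by (simp add: powr_mult)
  also have "\<dots> \<le> 3 powr 2 * (a powr s + \<rho> powr s)"
    using s a \<rho> max_powr_le_sum[of a \<rho> s] by (intro mult_mono powr_mono) auto
  finally show ?thesis by simp
qed

lemma neighbourhood_props:
  fixes U :: "(real \<times> real) set"
  assumes U: "bounded U" "U \<noteq> {}" and r: "r > 0" "diameter U \<le> r"
  defines "V \<equiv> (\<Union>u\<in>U. ball u r)"
  shows "U \<subseteq> V" "V \<noteq> {}" "bounded V" "0 < diameter V" "diameter V \<le> 3 * r"
proof -
  show "U \<subseteq> V" unfolding V_def using r by auto
  then show "V \<noteq> {}" using U by auto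
  obtain u0 where u0: "u0 \<in> U" using U by auto
  have dU: "dist u u' \<le> r" if "u \<in> U" "u' \<in> U" for u u'
    using diameter_bounded_bound[OF U(1) that] r by linarith
  have "V \<subseteq> cball u0 (2 * r)"
  proof
    fix v assume "v \<in> V"
    then obtain u where u: "u \<in> U" "dist u v < r" unfolding V_def by auto
    thus "v \<in> cball u0 (2 * r)" using dist_triangle[of u0 v u] dU[OF u0 u(1)] by simp
  qed
  thus bV: "bounded V" using bounded_cball bounded_subset by blast
  show "diameter V \<le> 3 * r"
  proof (rule diameter_le)
    fix v w assume "v \<in> V" "w \<in> V"
    then obtain u u' where uu: "u \<in> U" "dist u v < r" "u' \<in> U" "dist u' w < r" unfolding V_def by auto
    have "dist v w \<le> dist v u + dist u u' + dist u' w"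
      using dist_triangle[of v w u] dist_triangle[of u w u'] by linarith
    also have "\<dots> \<le> 3 * r" using uu dU[OF uu(1) uu(3)] by (simp add: dist_commute)
    finally show "norm (v - w) \<le> 3 * r" by (simp add: dist_norm)
  qed (use r in simp)
  have far: "u0 + (r / 2, 0) \<in> V" unfolding V_def
    by (rule UN_I[OF u0]) (use r in \<open>simp add: dist_norm\<close>)
  have "dist u0 (u0 + (r / 2, 0)) \<le> diameter V"
    using diameter_bounded_bound[OF bV _ far] u0 \<open>U \<subseteq> V\<close> by blast
  thus "0 < diameter V" using r by (simp add: dist_norm)
qed

lemma compact_finite_neighbourhood_subcover:
  fixes U :: "nat \<Rightarrow> 'a::metric_space set"
  assumes K: "compact K" and cover: "K \<subseteq> (\<Union>n. U n)" and r: "\<And>n. r n > 0"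
  shows "\<exists>F. finite F \<and> (\<forall>k\<in>F. U k \<noteq> {}) \<and> K \<subseteq> (\<Union>k\<in>F. \<Union>u\<in>U k. ball u (r k))"
proof -
  define V where "V n = (\<Union>u\<in>U n. ball u (r n))" for n
  have cover_V: "K \<subseteq> (\<Union>n\<in>UNIV. V n)"
  proof
    fix x assume "x \<in> K"
    then obtain n where "x \<in> U n" using cover by blast
    hence "x \<in> V n" unfolding V_def using r[of n] by (intro UN_I[of x]) auto
    thus "x \<in> (\<Union>n\<in>UNIV. V n)" by blast
  qed
  have open_V: "open (V n)" if "n \<in> UNIV" for n unfolding V_def by (intro open_UN ballI open_ball)
  obtain F' where F': "F' \<subseteq> UNIV" "finite F'" "K \<subseteq> (\<Union>k\<in>F'. V k)"
    using compactE_image[OF K open_V cover_V] .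
  define F where "F = {k \<in> F'. U k \<noteq> {}}"
  have "K \<subseteq> (\<Union>k\<in>F. V k)"
  proof
    fix x assume "x \<in> K"
    then obtain k where k: "k \<in> F'" "x \<in> V k" using F'(3) by blast
    hence "U k \<noteq> {}" unfolding V_def by auto
    thus "x \<in> (\<Union>k\<in>F. V k)" using k unfolding F_def by blast
  qed
  moreover have "finite F" using F'(2) unfolding F_def by simp
  ultimately show ?thesis unfolding F_def V_def by blast
qed

lemma geometric_radii:
  assumes s: "0 < s" "s \<le> 2" and \<theta>: "0 < \<theta>" "\<theta> \<le> 1 / 9"
  obtains \<rho> :: "nat \<Rightarrow> real" where "\<And>n. 0 < \<rho> n" "\<And>n. \<rho> n \<le> 1 / 3" "\<And>n. \<rho> n powr s = \<theta> / 2 ^ Suc n"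
proof
  define \<rho> where "\<rho> n = (\<theta> / 2 ^ Suc n) powr (1 / s)" for n
  show pos: "0 < \<rho> n" for n unfolding \<rho>_def using \<theta> by simp
  show pow: "\<rho> n powr s = \<theta> / 2 ^ Suc n" for n unfolding \<rho>_def using \<theta> s by (simp add: powr_powr)
  show "\<rho> n \<le> 1 / 3" for n
  proof -
    have "(1::real) \<le> 2 ^ Suc n" by (rule one_le_power) simp
    hence "\<rho> n powr s \<le> \<theta> / 1" unfolding pow using \<theta> by (intro divide_left_mono) auto
    also have "\<dots> \<le> (1 / 3) powr 2" using \<theta> by (simp add: power2_eq_square)
    also have "\<dots> \<le> (1 / 3) powr s" using s by (intro powr_mono') auto
    finally have "\<rho> n powr s \<le> (1 / 3) powr s" .
    moreover have "(1 / 3) powr s < \<rho> n powr s" if "\<rho> n > 1 / 3"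
      using that s by (intro powr_less_mono2) auto
    ultimately show ?thesis by fastforce
  qed
qed

lemma sum_geometric_le:
  fixes \<theta> :: real
  assumes "finite F" "\<theta> \<ge> 0"
  shows "(\<Sum>k\<in>F. \<theta> / 2 ^ Suc k) \<le> \<theta>"
proof -
  have sums: "(\<lambda>n. \<theta> * (1 / 2) ^ Suc n) sums (\<theta> * 1)" by (rule sums_mult[OF power_half_series])
  have "(\<Sum>k\<in>F. \<theta> / 2 ^ Suc k) = (\<Sum>k\<in>F. \<theta> * (1 / 2) ^ Suc k)" by (simp add: power_one_over)
  also have "\<dots> \<le> (\<Sum>n. \<theta> * (1 / 2) ^ Suc n)"
    using assms by (intro sum_le_suminf[OF sums_summable[OF sums]]) auto
  finally show ?thesis using sums_unique[OF sums] by simp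
qed

lemma cover_sum_ge_finite:
  assumes "s > 0" "finite F" "\<And>k. k \<in> F \<Longrightarrow> U k \<noteq> {}"
  shows "ennreal (\<Sum>k\<in>F. diameter (U k) powr s) \<le> cover_sum s U"
proof -
  have "ennreal (\<Sum>k\<in>F. diameter (U k) powr s) = (\<Sum>k\<in>F. ennreal (diameter (U k) powr s))"
    by (rule sum_ennreal[symmetric]) simp
  also have "\<dots> = (\<Sum>k\<in>F. (if U k = {} then 0 else if s = 0 then 1 else ennreal (diameter (U k) powr s)))"
    using assms by (intro sum.cong) auto
  also have "\<dots> \<le> cover_sum s U"
    unfolding cover_sum_def using assms(2) by (rule sum_le_suminf[OF summableI]) simp
  finally show ?thesis .
qed

text \<open>The Cantor construction in base N: G L Q says that the level-L cell Q is admissible.\<close>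

definition good_children :: "nat \<Rightarrow> (nat \<Rightarrow> nat \<times> nat \<Rightarrow> bool) \<Rightarrow> nat \<Rightarrow> nat \<times> nat \<Rightarrow> (nat \<times> nat) set" where
  "good_children N G L P = {Q \<in> children N P. G L Q}"

locale cantor_construction =
  fixes N M :: nat and G :: "nat \<Rightarrow> nat \<times> nat \<Rightarrow> bool"
  assumes N_ge_2: "N \<ge> 2" and M_pos: "M \<ge> 1"
    and enough_good: "\<And>L P. P \<in> grid N L \<Longrightarrow> M \<le> card (good_children N G (Suc L) P)"
begin

definition chosen :: "nat \<Rightarrow> nat \<times> nat \<Rightarrow> (nat \<times> nat) set" where
  "chosen L P = (SOME S. S \<subseteq> good_children N G L P \<and> card S = M)"

primrec survivors :: "nat \<Rightarrow> (nat \<times> nat) set" where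
  "survivors 0 = {(0, 0)}"
| "survivors (Suc L) = (\<Union>P\<in>survivors L. chosen (Suc L) P)"

definition limit_set :: "(real \<times> real) set" where
  "limit_set = (\<Inter>L. \<Union>Q\<in>survivors L. cell N L Q)"

lemma chosen_props:
  assumes "P \<in> grid N L"
  shows "chosen (Suc L) P \<subseteq> good_children N G (Suc L) P" "card (chosen (Suc L) P) = M"
proof -
  obtain S where "S \<subseteq> good_children N G (Suc L) P" "card S = M"
    using obtain_subset_with_card_n[OF enough_good[OF assms]] by metis
  hence "\<exists>S. S \<subseteq> good_children N G (Suc L) P \<and> card S = M" by blast
  from someI_ex[OF this] show "chosen (Suc L) P \<subseteq> good_children N G (Suc L) P" "card (chosen (Suc L) P) = M"
    unfolding chosen_def by blast+
qed

lemma survivors_grid: "survivors L \<subseteq> grid N L"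
proof (induction L)
  case (Suc L)
  show ?case
  proof
    fix Q assume "Q \<in> survivors (Suc L)"
    then obtain P where P: "P \<in> survivors L" "Q \<in> chosen (Suc L) P" by auto
    hence "P \<in> grid N L" using Suc by auto
    hence "Q \<in> children N P" using chosen_props(1) P(2) unfolding good_children_def by blast
    thus "Q \<in> grid N (Suc L)" using children_grid \<open>P \<in> grid N L\<close> by blast
  qed
qed (simp add: grid_def)

lemma finite_survivors: "finite (survivors L)"
  using survivors_grid[of L] by (rule finite_subset) (simp add: grid_def)

lemma chosen_survivor:
  assumes "P \<in> survivors L"
  shows "chosen (Suc L) P \<subseteq> children N P" "card (chosen (Suc L) P) = M" "finite (chosen (Suc L) P)"
proof -
  have P: "P \<in> grid N L" using survivors_grid assms by blast
  show "chosen (Suc L) P \<subseteq> children N P" using chosen_props(1)[OF P] by (auto simp: good_children_def)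
  show card: "card (chosen (Suc L) P) = M" by (rule chosen_props(2)[OF P])
  show "finite (chosen (Suc L) P)" using card M_pos by (intro card_ge_0_finite) simp
qed

lemma chosen_parent:
  assumes "P \<in> survivors L" "Q \<in> chosen (Suc L) P"
  shows "ancestor N 1 Q = P"
proof -
  have "Q \<in> children N P" using chosen_survivor(1)[OF assms(1)] assms(2) by blast
  thus ?thesis using N_ge_2 by (intro ancestor_children) simp_all
qed

lemma survivor_good: "Q \<in> survivors (Suc L) \<Longrightarrow> G (Suc L) Q"
  using chosen_props(1) survivors_grid by (fastforce simp: good_children_def)

lemma survivor_parent:
  assumes "Q \<in> survivors (Suc L)"
  shows "ancestor N 1 Q \<in> survivors L" "Q \<in> chosen (Suc L) (ancestor N 1 Q)"
proof -
  obtain P where P: "P \<in> survivors L" "Q \<in> chosen (Suc L) P" using assms by auto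
  hence "ancestor N 1 Q = P" by (rule chosen_parent)
  thus "ancestor N 1 Q \<in> survivors L" "Q \<in> chosen (Suc L) (ancestor N 1 Q)" using P by simp_all
qed

lemma survivor_ancestor: "Q \<in> survivors (L + k) \<Longrightarrow> ancestor N k Q \<in> survivors L"
proof (induction k arbitrary: Q)
  case (Suc k)
  hence "ancestor N 1 Q \<in> survivors (L + k)" using survivor_parent by simp
  thus ?case using Suc.IH ancestor_Suc by metis
qed simp

lemma card_survivors: "card (survivors L) = M ^ L"
proof (induction L)
  case (Suc L)
  have disjoint: "chosen (Suc L) P \<inter> chosen (Suc L) P' = {}"
    if "P \<in> survivors L" "P' \<in> survivors L" "P \<noteq> P'" for P P'
  proof -
    have "ancestor N 1 Q = P" "ancestor N 1 Q = P'"
      if "Q \<in> chosen (Suc L) P" "Q \<in> chosen (Suc L) P'" for Q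
      using that chosen_parent \<open>P \<in> survivors L\<close> \<open>P' \<in> survivors L\<close> by blast+
    thus ?thesis using \<open>P \<noteq> P'\<close> by blast
  qed
  have "card (survivors (Suc L)) = (\<Sum>P\<in>survivors L. card (chosen (Suc L) P))"
    unfolding survivors.simps using chosen_survivor(3) disjoint
    by (intro card_UN_disjoint[OF finite_survivors]) blast+
  also have "\<dots> = M ^ Suc L" using chosen_survivor(2) Suc by simp
  finally show ?case .
qed simp

lemma card_descendants: "card {Q \<in> survivors (L + k). ancestor N k Q = P} \<le> M ^ k"
proof (induction k)
  case 0
  have "{Q \<in> survivors (L + 0). ancestor N 0 Q = P} \<subseteq> {P}" by auto
  from card_mono[OF _ this] show ?case by simp
next
  case (Suc k)
  let ?D = "{Q \<in> survivors (L + k). ancestor N k Q = P}"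
  have fD: "finite ?D" using finite_survivors by simp
  have "{Q \<in> survivors (L + Suc k). ancestor N (Suc k) Q = P} \<subseteq> (\<Union>R\<in>?D. chosen (Suc (L + k)) R)"
  proof
    fix Q assume Q: "Q \<in> {Q \<in> survivors (L + Suc k). ancestor N (Suc k) Q = P}"
    hence "ancestor N (Suc k) Q = P" by simp
    hence "ancestor N k (ancestor N 1 Q) = P" by (simp only: ancestor_Suc)
    moreover have "ancestor N 1 Q \<in> survivors (L + k)" using Q survivor_parent(1) by auto
    ultimately have "ancestor N 1 Q \<in> ?D" by blast
    moreover have "Q \<in> chosen (Suc (L + k)) (ancestor N 1 Q)" using Q survivor_parent(2) by auto
    ultimately show "Q \<in> (\<Union>R\<in>?D. chosen (Suc (L + k)) R)" by blast
  qed
  hence "card {Q \<in> survivors (L + Suc k). ancestor N (Suc k) Q = P}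
      \<le> card (\<Union>R\<in>?D. chosen (Suc (L + k)) R)"
    by (rule card_mono[rotated]) (use fD chosen_survivor(3) in blast)
  also have "\<dots> \<le> (\<Sum>R\<in>?D. card (chosen (Suc (L + k)) R))" by (rule card_UN_le[OF fD])
  also have "\<dots> = card ?D * M" using chosen_survivor(2) by simp
  also have "\<dots> \<le> M ^ Suc k" using Suc by simp
  finally show ?case .
qed

lemma limit_set_subset: "limit_set \<subseteq> unit_square"
proof -
  have "limit_set \<subseteq> (\<Union>Q\<in>survivors 0. cell N 0 Q)" unfolding limit_set_def by blast
  thus ?thesis using cell_root[of N] by simp
qed

lemma compact_limit_set: "compact limit_set"
  unfolding compact_eq_bounded_closed
proof
  show "bounded limit_set"
    using limit_set_subset by (rule bounded_subset[rotated]) (simp add: unit_square_def bounded_Times)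
  show "closed limit_set"
    unfolding limit_set_def by (intro closed_INT ballI closed_UN finite_survivors compact_imp_closed compact_cell)
qed

lemma survivor_chain:
  assumes "Q \<in> survivors L"
  obtains ch where "ch 0 = Q" "\<And>k. ch k \<in> survivors (L + k)" "\<And>k. ancestor N 1 (ch (Suc k)) = ch k"
proof -
  define ch where "ch = rec_nat Q (\<lambda>k R. SOME R'. R' \<in> chosen (Suc (L + k)) R)"
  have ch_Suc: "ch (Suc k) = (SOME R'. R' \<in> chosen (Suc (L + k)) (ch k))" for k
    by (simp add: ch_def)
  have step: "ch k \<in> survivors (L + k) \<and> ch (Suc k) \<in> chosen (Suc (L + k)) (ch k)" for k
  proof (induction k)
    case 0
    have "ch 0 = Q" by (simp add: ch_def)
    moreover have "chosen (Suc L) Q \<noteq> {}" using chosen_survivor(2)[OF assms] M_pos by auto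
    ultimately show ?case using assms ch_Suc[of 0] by (simp add: some_in_eq)
  next
    case (Suc k)
    hence survives: "ch (Suc k) \<in> survivors (L + Suc k)" by auto
    hence "chosen (Suc (L + Suc k)) (ch (Suc k)) \<noteq> {}"
      using chosen_survivor(2)[of "ch (Suc k)" "L + Suc k"] M_pos by auto
    thus ?case using survives unfolding ch_Suc[of "Suc k"] by (simp add: some_in_eq)
  qed
  show ?thesis
  proof
    show "ch 0 = Q" by (simp add: ch_def)
    show "ch k \<in> survivors (L + k)" for k using step by blast
    show "ancestor N 1 (ch (Suc k)) = ch k" for k using step chosen_parent by blast
  qed
qed

text \<open>Every surviving cell contains a point of the limit set (nested compact sets).\<close>

lemma limit_point_in_cell:
  assumes "Q \<in> survivors L"
  obtains \<gamma> where "\<gamma> \<in> limit_set" "\<gamma> \<in> cell N L Q"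
proof -
  obtain ch where ch: "ch 0 = Q" "\<And>k. ch k \<in> survivors (L + k)" "\<And>k. ancestor N 1 (ch (Suc k)) = ch k"
    using survivor_chain[OF assms] by blast
  define F where "F k = cell N (L + k) (ch k)" for k
  have "decseq F"
  proof (rule decseq_SucI)
    show "F (Suc k) \<subseteq> F k" for k
      using cell_ancestor_subset[of N "L + k" 1 "ch (Suc k)"] ch(3)[of k] N_ge_2 by (simp add: F_def)
  qed
  hence "\<Inter> (range F) \<noteq> {}"
    by (intro compact_nest) (auto simp: F_def compact_cell cell_nonempty decseq_def)
  then obtain \<gamma> where \<gamma>: "\<gamma> \<in> F k" for k by blast
  have "\<gamma> \<in> cell N L' (ancestor N L (ch L'))" "ancestor N L (ch L') \<in> survivors L'" for L'
    using \<gamma>[of L'] cell_ancestor_subset[of N L' L "ch L'"] survivor_ancestor[of "ch L'" L' L] ch(2)[of L'] N_ge_2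
    by (auto simp: F_def add.commute)
  hence "\<gamma> \<in> limit_set" unfolding limit_set_def by blast
  moreover have "\<gamma> \<in> cell N L Q" using \<gamma>[of 0] ch(1) by (simp add: F_def)
  ultimately show ?thesis using that by blast
qed

lemma limit_set_nonempty: "limit_set \<noteq> {}"
  using limit_point_in_cell[of "(0, 0)" 0] by auto

text \<open>Mass distribution principle in counting form: the uniform mass on the limit set gives
  each surviving level-L cell mass M^-L, so the cells met by a finite cover carry total mass at least 1.\<close>

lemma survivors_cover_mass:
  fixes V :: "'k \<Rightarrow> (real \<times> real) set" and lev :: "'k \<Rightarrow> nat"
  assumes F: "finite F" and cover: "limit_set \<subseteq> (\<Union>k\<in>F. V k)"
  defines "S k \<equiv> {P \<in> survivors (lev k). cell N (lev k) P \<inter> V k \<noteq> {}}"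
  shows "1 \<le> (\<Sum>k\<in>F. real (card (S k)) / real M ^ lev k)"
proof -
  have "F \<noteq> {}" using cover limit_set_nonempty by auto
  define top where "top = Max (lev ` F)"
  have lev_top: "lev k \<le> top" if "k \<in> F" for k unfolding top_def using F that by simp
  define D where "D k P = {Q \<in> survivors (lev k + (top - lev k)). ancestor N (top - lev k) Q = P}" for k P
  have fin_S: "finite (S k)" for k using finite_survivors[of "lev k"] unfolding S_def by simp
  have fin_D: "finite (D k P)" for k P using finite_survivors unfolding D_def by simp
  have covers_top: "survivors top \<subseteq> (\<Union>k\<in>F. \<Union>P\<in>S k. D k P)"
  proof
    fix Q assume Q: "Q \<in> survivors top"
    obtain \<gamma> where \<gamma>: "\<gamma> \<in> limit_set" "\<gamma> \<in> cell N top Q" using limit_point_in_cell[OF Q] by blast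
    obtain k where k: "k \<in> F" "\<gamma> \<in> V k" using cover \<gamma>(1) by blast
    have top_eq: "top = lev k + (top - lev k)" using lev_top[OF k(1)] by simp
    have "Q \<in> survivors (lev k + (top - lev k))" using Q top_eq by simp
    hence "ancestor N (top - lev k) Q \<in> survivors (lev k)" "Q \<in> D k (ancestor N (top - lev k) Q)"
      using survivor_ancestor unfolding D_def by auto
    moreover have "\<gamma> \<in> cell N (lev k) (ancestor N (top - lev k) Q)"
      using \<gamma>(2) cell_ancestor_subset[of N "lev k" "top - lev k" Q] N_ge_2 top_eq by auto
    ultimately show "Q \<in> (\<Union>k\<in>F. \<Union>P\<in>S k. D k P)" using k unfolding S_def by blast
  qed
  have "M ^ top \<le> card (\<Union>k\<in>F. \<Union>P\<in>S k. D k P)"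
    unfolding card_survivors[symmetric] using F fin_S fin_D by (intro card_mono[OF _ covers_top]) auto
  also have "\<dots> \<le> (\<Sum>k\<in>F. \<Sum>P\<in>S k. card (D k P))"
    using F fin_S by (intro order_trans[OF card_UN_le] sum_mono card_UN_le) auto
  also have "\<dots> \<le> (\<Sum>k\<in>F. card (S k) * M ^ (top - lev k))"
  proof (intro sum_mono)
    fix k
    have "(\<Sum>P\<in>S k. card (D k P)) \<le> (\<Sum>P\<in>S k. M ^ (top - lev k))"
      unfolding D_def by (intro sum_mono card_descendants)
    thus "(\<Sum>P\<in>S k. card (D k P)) \<le> card (S k) * M ^ (top - lev k)" by simp
  qed
  finally have "real (M ^ top) \<le> real (\<Sum>k\<in>F. card (S k) * M ^ (top - lev k))"
    by (simp only: of_nat_le_iff)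
  hence "real M ^ top * 1 \<le> (\<Sum>k\<in>F. real (card (S k)) * real M ^ (top - lev k))"
    by (simp only: of_nat_sum of_nat_mult of_nat_power mult_1_right)
  also have "\<dots> = real M ^ top * (\<Sum>k\<in>F. real (card (S k)) / real M ^ lev k)"
    unfolding sum_distrib_left using M_pos lev_top by (intro sum.cong refl) (simp add: power_diff)
  finally show ?thesis using M_pos by (simp only: mult_le_cancel_left_pos zero_less_power of_nat_0_less_iff)
qed

text \<open>A set of diameter d in (0,1] is comparable to cells of some level L:
  it meets at most (2N+2)^2 of them, and the mass M^-L of one of them is at most d^s.\<close>

lemma cell_level_for_diameter:
  assumes "0 < d" "d \<le> 1"
  obtains L where "1 / real N ^ L \<le> d" "d * real N ^ L \<le> real N"
proof -
  obtain L where L: "1 / real N ^ Suc L < d" "d \<le> 1 / real N ^ L"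
    using geometric_bracket[of "real N" d] assms N_ge_2 by auto
  show ?thesis
  proof (rule that[of "Suc L"])
    show "1 / real N ^ Suc L \<le> d" using L(1) by simp
    show "d * real N ^ Suc L \<le> real N" using L(2) N_ge_2 by (simp add: field_simps)
  qed
qed

lemma finite_cover_lower_bound:
  assumes s: "s > 0" and NM: "real N powr s \<le> real M" and F: "finite F"
    and V: "\<And>k. k \<in> F \<Longrightarrow> V k \<noteq> {} \<and> bounded (V k) \<and> 0 < diameter (V k) \<and> diameter (V k) \<le> 1"
    and cover: "limit_set \<subseteq> (\<Union>k\<in>F. V k)"
  shows "1 \<le> real ((2 * N + 2) ^ 2) * (\<Sum>k\<in>F. diameter (V k) powr s)"
proof -
  define C where "C = (2 * N + 2) ^ 2"
  have "\<forall>k\<in>F. \<exists>L. 1 / real N ^ L \<le> diameter (V k) \<and> diameter (V k) * real N ^ L \<le> real N"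
    using cell_level_for_diameter V by metis
  then obtain lev where lev: "\<And>k. k \<in> F \<Longrightarrow> 1 / real N ^ lev k \<le> diameter (V k)"
    "\<And>k. k \<in> F \<Longrightarrow> diameter (V k) * real N ^ lev k \<le> real N" by metis
  define S where "S k = {P \<in> survivors (lev k). cell N (lev k) P \<inter> V k \<noteq> {}}" for k
  have card_S: "card (S k) \<le> C" if k: "k \<in> F" for k
  proof -
    obtain v0 where v0: "v0 \<in> V k" using V[OF k] by blast
    have "dist v v0 \<le> diameter (V k)" if "v \<in> V k" for v
      using diameter_bounded_bound[OF _ that v0] V[OF k] by blast
    hence "finite {P. cell N (lev k) P \<inter> V k \<noteq> {}}" "card {P. cell N (lev k) P \<inter> V k \<noteq> {}} \<le> C"
      using cells_meeting_card[where d="diameter (V k)" and L="lev k", OF _ v0] N_ge_2 V[OF k] lev[OF k] unfolding C_def by auto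
    thus ?thesis using card_mono[of _ "S k"] unfolding S_def by fastforce
  qed
  have mass: "1 / real M ^ lev k \<le> diameter (V k) powr s" if k: "k \<in> F" for k
  proof -
    have N: "real N > 0" using N_ge_2 by simp
    have "1 / real M ^ lev k \<le> 1 / (real N powr s) ^ lev k"
      using NM N M_pos by (intro divide_left_mono power_mono mult_pos_pos) auto
    also have "\<dots> = (1 / real N ^ lev k) powr s"
      using N by (simp add: powr_divide powr_realpow[symmetric] powr_powr mult.commute)
    also have "\<dots> \<le> diameter (V k) powr s" using lev(1)[OF k] s N by (intro powr_mono2) auto
    finally show ?thesis .
  qed
  have "1 \<le> (\<Sum>k\<in>F. real (card (S k)) / real M ^ lev k)"
    unfolding S_def by (rule survivors_cover_mass[OF F cover])
  also have "\<dots> \<le> (\<Sum>k\<in>F. real C * diameter (V k) powr s)"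
  proof (intro sum_mono)
    fix k assume k: "k \<in> F"
    have "real (card (S k)) / real M ^ lev k = real (card (S k)) * (1 / real M ^ lev k)" by simp
    also have "\<dots> \<le> real C * diameter (V k) powr s"
      using card_S[OF k] mass[OF k] by (intro mult_mono) auto
    finally show "real (card (S k)) / real M ^ lev k \<le> real C * diameter (V k) powr s" .
  qed
  finally show ?thesis unfolding C_def sum_distrib_left .
qed

lemma neighbourhood_cover_bound:
  fixes U :: "nat \<Rightarrow> (real \<times> real) set"
  assumes s: "0 < s" "s \<le> 2" and NM: "real N powr s \<le> real M" and F: "finite F"
    and U: "\<And>k. k \<in> F \<Longrightarrow> U k \<noteq> {} \<and> bounded (U k) \<and> diameter (U k) \<le> 1 / 3"
    and \<rho>: "\<And>k. 0 < \<rho> k" "\<And>k. \<rho> k \<le> 1 / 3"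
    and cover: "limit_set \<subseteq> (\<Union>k\<in>F. \<Union>u\<in>U k. ball u (max (diameter (U k)) (\<rho> k)))"
  shows "1 \<le> 9 * real ((2 * N + 2) ^ 2) * (\<Sum>k\<in>F. diameter (U k) powr s + \<rho> k powr s)"
proof -
  define V where "V k = (\<Union>u\<in>U k. ball u (max (diameter (U k)) (\<rho> k)))" for k
  have V: "V k \<noteq> {}" "bounded (V k)" "0 < diameter (V k)" "diameter (V k) \<le> 3 * max (diameter (U k)) (\<rho> k)"
    if "k \<in> F" for k
    using neighbourhood_props[of "U k" "max (diameter (U k)) (\<rho> k)"] U[OF that] \<rho>[of k]
    unfolding V_def by auto
  have "1 \<le> real ((2 * N + 2) ^ 2) * (\<Sum>k\<in>F. diameter (V k) powr s)"
  proof (rule finite_cover_lower_bound[OF s(1) NM F])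
    show "V k \<noteq> {} \<and> bounded (V k) \<and> 0 < diameter (V k) \<and> diameter (V k) \<le> 1" if "k \<in> F" for k
      using V[OF that] U[OF that] \<rho>(2)[of k] by auto
    show "limit_set \<subseteq> (\<Union>k\<in>F. V k)" using cover unfolding V_def .
  qed
  also have "\<dots> \<le> real ((2 * N + 2) ^ 2) * (\<Sum>k\<in>F. 9 * (diameter (U k) powr s + \<rho> k powr s))"
  proof (intro mult_left_mono sum_mono)
    fix k assume k: "k \<in> F"
    show "diameter (V k) powr s \<le> 9 * (diameter (U k) powr s + \<rho> k powr s)"
      using V[OF k] U[OF k] \<rho>(1) by (intro enlarged_diameter_powr[OF s diameter_ge_0]) auto
  qed simp
  also have "\<dots> = real ((2 * N + 2) ^ 2) * (9 * (\<Sum>k\<in>F. diameter (U k) powr s + \<rho> k powr s))"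
    by (simp only: sum_distrib_left)
  finally show ?thesis by (simp only: ac_simps)
qed

text \<open>The cover is made
  open by slightly enlarging its members (radii summing to a small amount), compactness
  reduces it to a finite cover, and the finite case is the counting bound above.\<close>

lemma cover_sum_lower_bound:
  fixes U :: "nat \<Rightarrow> (real \<times> real) set"
  assumes s: "0 < s" "s \<le> 2" and NM: "real N powr s \<le> real M" and A: "limit_set \<subseteq> A"
    and cover: "A \<subseteq> (\<Union>n. U n)" and U: "\<And>n. bounded (U n)" "\<And>n. diameter (U n) \<le> 1 / 3"
  shows "ennreal (1 / (18 * real ((2 * N + 2) ^ 2))) \<le> cover_sum s U"
proof -
  define C where "C = real ((2 * N + 2) ^ 2)"
  define \<theta> where "\<theta> = 1 / (18 * C)"
  have C: "C \<ge> 1" unfolding C_def by simp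
  have \<theta>: "0 < \<theta>" "\<theta> \<le> 1 / 9" using C by (simp_all add: \<theta>_def field_simps)
  obtain \<rho> where \<rho>: "\<And>n. 0 < \<rho> n" "\<And>n. \<rho> n \<le> 1 / 3" "\<And>n. \<rho> n powr s = \<theta> / 2 ^ Suc n"
    using geometric_radii[OF s \<theta>] by blast
  define r where "r n = max (diameter (U n)) (\<rho> n)" for n
  have r: "0 < r n" for n using \<rho>(1)[of n] by (simp add: r_def)
  have "limit_set \<subseteq> (\<Union>n. U n)" using A cover by blast
  from compact_finite_neighbourhood_subcover[where r = r, OF compact_limit_set this r]
  obtain F where F: "finite F" "\<forall>k\<in>F. U k \<noteq> {}"
    and cover_F: "limit_set \<subseteq> (\<Union>k\<in>F. \<Union>u\<in>U k. ball u (r k))" by (elim exE conjE)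
  have "1 \<le> 9 * C * (\<Sum>k\<in>F. diameter (U k) powr s + \<rho> k powr s)"
    unfolding C_def using F(2) U \<rho>(1,2) cover_F unfolding r_def
    by (intro neighbourhood_cover_bound[OF s NM F(1)]) auto
  also have "\<dots> \<le> 9 * C * ((\<Sum>k\<in>F. diameter (U k) powr s) + \<theta>)"
    using C \<theta> sum_geometric_le[OF F(1), of \<theta>]
    by (intro mult_left_mono) (simp_all add: \<rho>(3) sum.distrib)
  finally have "\<theta> \<le> (\<Sum>k\<in>F. diameter (U k) powr s)"
    using C by (simp add: \<theta>_def field_simps)
  hence "ennreal \<theta> \<le> ennreal (\<Sum>k\<in>F. diameter (U k) powr s)" by (rule ennreal_leI)
  also have "\<dots> \<le> cover_sum s U" by (rule cover_sum_ge_finite[OF s(1) F(1)]) (use F(2) in blast)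
  finally show ?thesis unfolding \<theta>_def C_def .
qed

lemma hausdorff_measure_positive:
  assumes s: "0 < s" "s \<le> 2" and NM: "real N powr s \<le> real M" and A: "limit_set \<subseteq> A"
  shows "hausdorff_measure s A \<noteq> 0"
proof -
  define \<kappa> where "\<kappa> = ennreal (1 / (18 * real ((2 * N + 2) ^ 2)))"
  have "\<kappa> \<le> hausdorff_pre s (1 / 3) A"
    unfolding hausdorff_pre_def \<kappa>_def using cover_sum_lower_bound[OF s NM A] by (intro INF_greatest) auto
  also have "\<dots> \<le> hausdorff_measure s A"
    unfolding hausdorff_measure_def by (rule SUP_upper) simp
  finally show ?thesis unfolding \<kappa>_def by (auto simp: ennreal_eq_0_iff)
qed

end

lemma unit_interval_cell:
  assumes n: "n \<ge> 1" and y: "0 \<le> y" "y \<le> 1"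
  obtains a where "a < n" "y \<in> adic_interval n 1 a"
proof
  define a where "a = min (nat \<lfloor>y * real n\<rfloor>) (n - 1)"
  show "a < n" using n unfolding a_def by simp
  have "real a \<le> real (nat \<lfloor>y * real n\<rfloor>)" unfolding a_def by simp
  also have "\<dots> \<le> y * real n" using y by simp
  finally have "real a \<le> y * real n" .
  moreover have "y * real n \<le> real a + 1"
  proof (cases "nat \<lfloor>y * real n\<rfloor> \<le> n - 1")
    case True thus ?thesis using y unfolding a_def by linarith
  next
    case False thus ?thesis using y n unfolding a_def by (simp add: mult_left_le_one_le of_nat_diff)
  qed
  ultimately show "y \<in> adic_interval n 1 a" using adic_interval_iff[OF n] by simp
qed

lemma grid_cover_bound:
  fixes A :: "(real \<times> real) set"
  assumes A: "A \<subseteq> unit_square" and n: "n \<ge> 1" and \<delta>: "2 / real n \<le> \<delta>" and s: "s > 0"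
  shows "hausdorff_pre s \<delta> A \<le> ennreal (real (n * n) * (2 / real n) powr s)"
proof -
  define U where "U k = (if k < n * n then cell n 1 (k div n, k mod n) else {})" for k
  have U: "bounded (U k)" "diameter (U k) \<le> 2 / real n" for k
    using compact_imp_bounded[OF compact_cell] cell_diameter[of n 1] n unfolding U_def by auto
  have "A \<subseteq> (\<Union>k. U k)"
  proof
    fix y assume "y \<in> A"
    hence y: "0 \<le> fst y" "fst y \<le> 1" "0 \<le> snd y" "snd y \<le> 1" using A unfolding unit_square_def by auto
    obtain a where a: "a < n" "fst y \<in> adic_interval n 1 a" using unit_interval_cell[OF n y(1,2)] .
    obtain b where b: "b < n" "snd y \<in> adic_interval n 1 b" using unit_interval_cell[OF n y(3,4)] .
    have "a * n + b < n * n" using a(1) b(1) mult_le_mono1[of "Suc a" n n] by simp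
    moreover have "(a * n + b) div n = a" "(a * n + b) mod n = b" using b(1) by auto
    ultimately have "y \<in> U (a * n + b)" using a b unfolding U_def cell_def by (simp add: mem_Times_iff)
    thus "y \<in> (\<Union>k. U k)" by blast
  qed
  hence "hausdorff_pre s \<delta> A \<le> cover_sum s U"
    unfolding hausdorff_pre_def using U \<delta> by (intro INF_lower) (auto intro: order_trans)
  also have "cover_sum s U
      = (\<Sum>k<n * n. if U k = {} then 0 else if s = 0 then 1 else ennreal (diameter (U k) powr s))"
    unfolding cover_sum_def by (rule suminf_finite) (auto simp: U_def)
  also have "\<dots> \<le> (\<Sum>k<n * n. ennreal ((2 / real n) powr s))"
    using U s by (intro sum_mono) (auto intro!: ennreal_leI powr_mono2 simp: diameter_ge_0)
  also have "\<dots> = ennreal (real (n * n) * (2 / real n) powr s)"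
    by (simp add: ennreal_mult ennreal_of_nat_eq_real_of_nat)
  finally show ?thesis .
qed

lemma hausdorff_measure_above_2:
  fixes A :: "(real \<times> real) set"
  assumes A: "A \<subseteq> unit_square" and s: "s > 2"
  shows "hausdorff_measure s A = 0"
proof -
  have "hausdorff_pre s \<delta> A \<le> ennreal \<epsilon>" if \<delta>: "\<delta> > 0" and \<epsilon>: "\<epsilon> > 0" for \<delta> \<epsilon>
  proof -
    define K where "K = (2 powr s / \<epsilon>) powr (1 / (s - 2))"
    define n where "n = nat \<lceil>max (2 / \<delta>) K\<rceil> + 1"
    have n: "n \<ge> 1" "real n \<ge> K" "real n \<ge> 2 / \<delta>" unfolding n_def by linarith+
    have K: "K > 0" unfolding K_def using \<epsilon> by simp
    have "2 \<le> \<delta> * real n" using n(3) \<delta> by (simp add: field_simps)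
    hence "2 / real n \<le> \<delta>" using n(1) by (simp add: divide_le_eq)
    hence "hausdorff_pre s \<delta> A \<le> ennreal (real (n * n) * (2 / real n) powr s)"
      using grid_cover_bound[OF A n(1)] s by simp
    also have "real (n * n) * (2 / real n) powr s = 2 powr s / real n powr (s - 2)"
      using n(1) by (simp add: powr_divide powr_diff power2_eq_square[symmetric])
    also have "\<dots> \<le> 2 powr s / K powr (s - 2)"
      using n(2) K s by (intro divide_left_mono powr_mono2 mult_pos_pos) auto
    also have "\<dots> = \<epsilon>" unfolding K_def using s \<epsilon> by (simp add: powr_powr)
    finally show ?thesis by (simp add: ennreal_leI)
  qed
  hence "hausdorff_pre s \<delta> A = 0" if "\<delta> > 0" for \<delta>
    using that by (metis add_0 ennreal_le_epsilon le_zero_eq)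
  thus ?thesis unfolding hausdorff_measure_def by simp
qed

text \<open>H^0 does not vanish on nonempty sets, which settles the case s = 0 of the lower bound.\<close>

lemma hausdorff_measure_0_nonempty:
  fixes A :: "'a::metric_space set"
  assumes "a \<in> A"
  shows "hausdorff_measure 0 A \<noteq> 0"
proof -
  have "1 \<le> cover_sum 0 U" if cover: "A \<subseteq> (\<Union>n. U n)" for U :: "nat \<Rightarrow> 'a set"
  proof -
    obtain n where "a \<in> U n" using cover assms by blast
    hence "(\<Sum>k\<in>{n}. (if U k = {} then 0 else if (0::real) = 0 then 1 else ennreal (diameter (U k) powr 0)))
        = 1" by auto
    moreover have "(\<Sum>k\<in>{n}. (if U k = {} then 0 else if (0::real) = 0 then 1 else ennreal (diameter (U k) powr 0)))
        \<le> cover_sum 0 U"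
      unfolding cover_sum_def by (rule sum_le_suminf[OF summableI]) auto
    ultimately show ?thesis by simp
  qed
  hence "1 \<le> hausdorff_pre 0 1 A" unfolding hausdorff_pre_def by (intro INF_greatest) auto
  also have "\<dots> \<le> hausdorff_measure 0 A" unfolding hausdorff_measure_def by (rule SUP_upper) simp
  finally show ?thesis by auto
qed

lemma hausdorff_dim_eqI:
  fixes A :: "'a::metric_space set"
  assumes d: "d \<ge> 0"
    and below: "\<And>s. 0 \<le> s \<Longrightarrow> s < d \<Longrightarrow> hausdorff_measure s A \<noteq> 0"
    and above: "\<And>s. s > d \<Longrightarrow> hausdorff_measure s A = 0"
  shows "hausdorff_dim A = ereal d"
  unfolding hausdorff_dim_def
proof (rule antisym)
  show "Inf (ereal ` {s. s \<ge> 0 \<and> hausdorff_measure s A = 0}) \<le> ereal d"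
    unfolding Inf_le_iff
  proof (intro allI impI)
    fix y :: ereal assume "y > ereal d"
    then obtain z where z: "ereal d < ereal z" "ereal z < y" using ereal_dense2 by blast
    hence "z \<in> {s. s \<ge> 0 \<and> hausdorff_measure s A = 0}" using above[of z] d by simp
    thus "\<exists>a\<in>ereal ` {s. s \<ge> 0 \<and> hausdorff_measure s A = 0}. a < y" using z(2) by blast
  qed
  show "ereal d \<le> Inf (ereal ` {s. s \<ge> 0 \<and> hausdorff_measure s A = 0})"
    using below by (intro Inf_greatest) force
qed

lemma dist_int_nonneg: "dist_int y \<ge> 0"
  by (simp add: dist_int_def)

lemma dist_int_le_half: "dist_int y \<le> 1 / 2"
  unfolding dist_int_def using of_int_round_abs_le[of y] by (simp add: abs_minus_commute)

lemma dist_int_le: "dist_int y \<le> \<bar>y - of_int k\<bar>"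
proof (cases "k = round y")
  case False
  hence "1 \<le> \<bar>k - round y\<bar>" by simp
  hence "(1::real) \<le> \<bar>of_int k - of_int (round y)\<bar>" by (metis of_int_1_le_iff of_int_abs of_int_diff)
  thus ?thesis using dist_int_le_half[of y] unfolding dist_int_def by linarith
qed (simp add: dist_int_def)

lemma dist_int_minus: "dist_int (- y) = dist_int y"
  using dist_int_le[of "- y" "- round y"] dist_int_le[of y "- round (- y)"]
  by (simp add: dist_int_def abs_minus_commute)

lemma dist_int_add: "dist_int (a + b) \<le> dist_int a + dist_int b"
  using dist_int_le[of "a + b" "round a + round b"] by (simp add: dist_int_def)

lemma dist_int_le_abs: "dist_int y \<le> \<bar>y\<bar>"
  using dist_int_le[of y 0] by simp

lemma adic_intervals_near_mod1_card:
  assumes N: "N \<ge> 1" and r: "0 \<le> r" "r \<le> 1 / (2 * real N ^ L)"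
  shows "card {a. a < N ^ L \<and> (\<exists>y\<in>adic_interval N L a. dist_int (t - y) \<le> r)} \<le> 3"
proof -
  define T where "T = real N ^ L"
  have T: "T > 0" using N by (simp add: T_def)
  have rT: "r * T \<le> 1 / 2" using r T unfolding T_def[symmetric] by (simp add: field_simps)
  define w0 where "w0 = \<lceil>t * T - 3 / 2\<rceil>"
  let ?S = "{a. a < N ^ L \<and> (\<exists>y\<in>adic_interval N L a. dist_int (t - y) \<le> r)}"
  have "?S \<subseteq> (\<lambda>w. nat (w mod int (N ^ L))) ` {w0, w0 + 1, w0 + 2}"
  proof
    fix a assume "a \<in> ?S"
    then obtain y where a: "a < N ^ L" "real a \<le> y * T" "y * T \<le> real a + 1" "dist_int (t - y) \<le> r"
      using adic_interval_iff[OF N] unfolding T_def by auto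
    define k where "k = round (t - y)"
    have k: "\<bar>t - y - of_int k\<bar> \<le> r" using a(4) unfolding dist_int_def k_def .
    define w where "w = int a + k * int (N ^ L)"
    have w: "real_of_int w = real a + of_int k * T" unfolding w_def T_def by simp
    have "(t - of_int k - r) * T \<le> y * T" "y * T \<le> (t - of_int k + r) * T"
      using k T by (intro mult_right_mono; linarith)+
    hence lo: "t * T - 3 / 2 \<le> real_of_int w" and hi: "real_of_int w \<le> t * T + 1 / 2"
      using w a(2,3) rT by (simp_all add: algebra_simps)
    have "w0 \<le> w" unfolding w0_def using lo by (simp add: ceiling_le_iff)
    moreover have "real_of_int w \<le> real_of_int (w0 + 2)" unfolding w0_def using hi by linarith
    ultimately have "w \<in> {w0, w0 + 1, w0 + 2}" by auto
    moreover have "nat (w mod int (N ^ L)) = a"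
      using a(1) unfolding w_def by (simp add: zmod_int[symmetric])
    ultimately show "a \<in> (\<lambda>w. nat (w mod int (N ^ L))) ` {w0, w0 + 1, w0 + 2}" by force
  qed
  hence "card ?S \<le> card ((\<lambda>w. nat (w mod int (N ^ L))) ` {w0, w0 + 1, w0 + 2})"
    by (intro card_mono) simp_all
  also have "\<dots> \<le> card {w0, w0 + 1, w0 + 2}" by (rule card_image_le) simp
  also have "\<dots> \<le> 3" by (simp add: card_insert_if)
  finally show ?thesis .
qed

definition coord :: "bool \<Rightarrow> 'a \<times> 'a \<Rightarrow> 'a" where
  "coord b = (if b then fst else snd)"

lemma coord_simps [simp]: "coord True = fst" "coord False = snd"
  by (simp_all add: coord_def)

lemma children_coordinate_card:
  assumes "finite S"
  shows "card {Q \<in> children N P. coord b Q \<in> S} \<le> N * card S"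
proof -
  define A where "A a = {N * a ..< N * a + N}" for a
  have card_A: "card (A a) = N" "card (A a \<inter> S) \<le> card S" for a
    using assms by (auto simp: A_def intro: card_mono)
  show ?thesis
  proof (cases b)
    case True
    hence "{Q \<in> children N P. coord b Q \<in> S} = (A (fst P) \<inter> S) \<times> A (snd P)"
      unfolding children_def A_def by auto
    thus ?thesis using card_A by (simp add: card_cartesian_product)
  next
    case False
    hence "{Q \<in> children N P. coord b Q \<in> S} = A (fst P) \<times> (A (snd P) \<inter> S)"
      unfolding children_def A_def by auto
    thus ?thesis using card_A by (simp add: card_cartesian_product)
  qed
qed

text \<open>The resonant set of a denominator q: the targets gamma for which q violates the
  badly approximable inequality with constant c.\<close>

definition resonant_set :: "real \<Rightarrow> real \<Rightarrow> real \<times> real \<Rightarrow> real \<Rightarrow> int \<Rightarrow> (real \<times> real) set" where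
  "resonant_set i j x c q = {\<gamma>. dist_int (of_int q * fst x - fst \<gamma>) \<le> (c / \<bar>of_int q\<bar>) powr i \<and>
                                dist_int (of_int q * snd x - snd \<gamma>) \<le> (c / \<bar>of_int q\<bar>) powr j}"

text \<open>Denominators handled at level L: those whose resonant sets have width comparable to
  the level-L cells, i.e. (c/|q|)^max(i,j) lies in (1/(2N^(L+1)), 1/(2N^L)].\<close>

definition level_denominators :: "real \<Rightarrow> real \<Rightarrow> real \<Rightarrow> nat \<Rightarrow> nat \<Rightarrow> int set" where
  "level_denominators i j c N L = {q. q \<noteq> 0 \<and> 1 / (2 * real N ^ Suc L) < (c / \<bar>of_int q\<bar>) powr (max i j)
       \<and> (c / \<bar>of_int q\<bar>) powr (max i j) \<le> 1 / (2 * real N ^ L)}"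

definition avoids_resonances :: "real \<Rightarrow> real \<Rightarrow> real \<times> real \<Rightarrow> real \<Rightarrow> nat \<Rightarrow> nat \<Rightarrow> nat \<times> nat \<Rightarrow> bool" where
  "avoids_resonances i j x c N L P \<longleftrightarrow>
     (\<forall>q\<in>level_denominators i j c N L. cell N L P \<inter> resonant_set i j x c q = {})"

lemma wpow_gt_imp:
  assumes "wpow y e > b" "b > 0" "e \<ge> 0"
  shows "e > 0" "dist_int y > b powr e"
proof -
  show e: "e > 0" using assms unfolding wpow_def by (cases "e = 0") auto
  hence "b < dist_int y powr (1 / e)" using assms unfolding wpow_def by simp
  moreover have "dist_int y \<noteq> 0"
  proof
    assume "dist_int y = 0"
    thus False using calculation assms(2) by simp
  qed
  hence "dist_int y > 0" using dist_int_nonneg[of y] by linarith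
  ultimately have "b powr e < (dist_int y powr (1 / e)) powr e" using assms e by (intro powr_less_mono2) auto
  thus "dist_int y > b powr e" using e \<open>dist_int y > 0\<close> by (simp add: powr_powr)
qed

lemma outside_resonant_set:
  assumes i: "i \<ge> 0" and j: "j \<ge> 0" and c: "c > 0" and q: "q \<noteq> 0"
    and \<gamma>: "\<gamma> \<notin> resonant_set i j x c q"
  shows "max (wpow (of_int q * fst x - fst \<gamma>) i) (wpow (of_int q * snd x - snd \<gamma>) j) > c / \<bar>of_int q\<bar>"
proof -
  have b: "c / \<bar>of_int q\<bar> > 0" using c q by simp
  have wpow_gt: "wpow y e > c / \<bar>of_int q\<bar>" if "dist_int y > (c / \<bar>of_int q\<bar>) powr e" "e \<ge> 0" for y e
  proof (cases "e = 0")
    case True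
    thus ?thesis using that dist_int_le_half[of y] c q by simp
  next
    case False
    hence "((c / \<bar>of_int q\<bar>) powr e) powr (1 / e) < dist_int y powr (1 / e)"
      using that by (intro powr_less_mono2) auto
    thus ?thesis using False b c unfolding wpow_def by (simp add: powr_powr)
  qed
  from \<gamma> have "dist_int (of_int q * fst x - fst \<gamma>) > (c / \<bar>of_int q\<bar>) powr i \<or>
      dist_int (of_int q * snd x - snd \<gamma>) > (c / \<bar>of_int q\<bar>) powr j"
    unfolding resonant_set_def by auto
  thus ?thesis
  proof
    assume "dist_int (of_int q * fst x - fst \<gamma>) > (c / \<bar>of_int q\<bar>) powr i"
    from wpow_gt[OF this i] show ?thesis by (simp add: less_max_iff_disj)
  next
    assume "dist_int (of_int q * snd x - snd \<gamma>) > (c / \<bar>of_int q\<bar>) powr j"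
    from wpow_gt[OF this j] show ?thesis by (simp add: less_max_iff_disj)
  qed
qed

locale resonance_setting =
  fixes i j :: real and x :: "real \<times> real" and c0 c :: real and N :: nat
  assumes i_nonneg: "i \<ge> 0" and j_nonneg: "j \<ge> 0" and weights: "i + j = 1"
    and c0: "c0 > 0" "c0 \<le> 1"
    and bad: "\<And>p::nat. p \<ge> 1 \<Longrightarrow> max (wpow (real p * fst x) i) (wpow (real p * snd x) j) > c0 / real p"
    and N_ge_2: "N \<ge> 2" and c_pos: "c > 0"
    and c_small: "c powr (max i j) \<le> 1 / (2 * real N)"
    and c_small_i: "i > 0 \<Longrightarrow> (2 * real N ^ 2 * c / c0) powr i \<le> 1 / 4"
    and c_small_j: "j > 0 \<Longrightarrow> (2 * real N ^ 2 * c / c0) powr j \<le> 1 / 4"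
    and c_ratio: "(c0 / (2 * c)) powr (max i j) \<ge> 4 * real N ^ 2"
begin

abbreviation "m \<equiv> max i j"

abbreviation "D \<equiv> level_denominators i j c N"

lemma m_ge_half: "m \<ge> 1 / 2"
  using i_nonneg j_nonneg weights by linarith

text \<open>The larger weight is at least 1/2, so (N^2)^m \<ge> N.\<close>

lemma N_sq_powr: "(real N ^ 2) powr m \<ge> real N"
proof -
  have sq: "real N ^ 2 = real N powr 2" using N_ge_2 by simp
  have "(real N ^ 2) powr m = real N powr (2 * m)" unfolding sq by (rule powr_powr)
  also have "\<dots> \<ge> real N powr 1" using N_ge_2 m_ge_half by (intro powr_mono) auto
  finally show ?thesis using N_ge_2 by simp
qed

lemma denominators_comparable:
  assumes q: "q \<in> D (Suc L)" and q': "q' \<in> D (Suc L)"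
  shows "c / \<bar>of_int q'\<bar> \<le> real N ^ 2 * c / \<bar>of_int q\<bar>"
proof (rule ccontr)
  assume "\<not> ?thesis"
  hence "(real N ^ 2 * c / \<bar>of_int q\<bar>) powr m < (c / \<bar>of_int q'\<bar>) powr m"
    using m_ge_half c_pos by (intro powr_less_mono2) auto
  also have "\<dots> \<le> 1 / (2 * real N ^ Suc L)" using q' unfolding level_denominators_def by simp
  also have "\<dots> = real N * (1 / (2 * real N ^ Suc (Suc L)))" using N_ge_2 by (simp add: field_simps)
  also have "\<dots> \<le> real N * (c / \<bar>of_int q\<bar>) powr m"
    using q N_ge_2 unfolding level_denominators_def by (intro mult_left_mono) auto
  also have "\<dots> \<le> (real N ^ 2) powr m * (c / \<bar>of_int q\<bar>) powr m"
    using N_sq_powr by (intro mult_right_mono) auto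
  also have "\<dots> = (real N ^ 2 * c / \<bar>of_int q\<bar>) powr m"
    using c_pos by (simp add: powr_mult[symmetric] mult.assoc)
  finally show False by simp
qed

lemma resonance_radii_small:
  assumes e: "e = i \<or> e = j" "0 < e"
    and q: "q \<in> D (Suc L)" and q': "q' \<in> D (Suc L)" and qq': "\<bar>q'\<bar> \<le> \<bar>q\<bar>" "q \<noteq> q'"
  defines "p \<equiv> real (nat \<bar>q - q'\<bar>)"
  shows "(c / \<bar>of_int q\<bar>) powr e \<le> (c0 / p) powr e / 4" "(c / \<bar>of_int q'\<bar>) powr e \<le> (c0 / p) powr e / 4"
proof -
  have q0: "q' \<noteq> 0" using q' unfolding level_denominators_def by simp
  have p: "1 \<le> p" "p \<le> 2 * \<bar>of_int q\<bar>" using qq' unfolding p_def by linarith+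
  have "c / \<bar>of_int q'\<bar> \<le> real N ^ 2 * c / \<bar>of_int q\<bar>" by (rule denominators_comparable[OF q q'])
  also have "\<dots> = (real N ^ 2 * c) * (1 / \<bar>of_int q\<bar>)" by simp
  also have "\<dots> \<le> (real N ^ 2 * c) * (2 / p)"
    using p c_pos by (intro mult_left_mono) (auto simp: field_simps)
  also have "\<dots> = 2 * real N ^ 2 * c / p" by simp
  finally have "(c / \<bar>of_int q'\<bar>) powr e \<le> (2 * real N ^ 2 * c / p) powr e"
    using e c_pos by (intro powr_mono2) auto
  also have "\<dots> = (2 * real N ^ 2 * c / c0) powr e * (c0 / p) powr e"
    using c0 by (simp add: powr_mult[symmetric])
  also have "\<dots> \<le> 1 / 4 * (c0 / p) powr e"
    using e c_small_i c_small_j by (intro mult_right_mono) auto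
  finally show q'_small: "(c / \<bar>of_int q'\<bar>) powr e \<le> (c0 / p) powr e / 4" by simp
  have "(c / \<bar>of_int q\<bar>) powr e \<le> (c / \<bar>of_int q'\<bar>) powr e"
    using qq' q0 c_pos e by (intro powr_mono2 divide_left_mono) auto
  thus "(c / \<bar>of_int q\<bar>) powr e \<le> (c0 / p) powr e / 4" using q'_small by linarith
qed

lemma cell_side_small:
  assumes e: "e = i \<or> e = j"
    and q: "q \<in> D (Suc L)" and qq': "\<bar>q'\<bar> \<le> \<bar>q\<bar>" "q \<noteq> q'"
  defines "p \<equiv> real (nat \<bar>q - q'\<bar>)"
  shows "1 / real N ^ L \<le> (c0 / p) powr e / 2"
proof -
  have p: "1 \<le> p" "p \<le> 2 * \<bar>of_int q\<bar>" using qq' unfolding p_def by linarith+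
  have "2 / real N ^ L = 4 * real N ^ 2 * (1 / (2 * real N ^ Suc (Suc L)))"
    using N_ge_2 by (simp add: field_simps power2_eq_square)
  also have "\<dots> \<le> (c0 / (2 * c)) powr m * (c / \<bar>of_int q\<bar>) powr m"
    using c_ratio q N_ge_2 unfolding level_denominators_def by (intro mult_mono) auto
  also have "\<dots> = (c0 / (2 * \<bar>of_int q\<bar>)) powr m"
    using c_pos by (simp add: powr_mult[symmetric])
  also have "\<dots> \<le> (c0 / p) powr m"
    using p c0 m_ge_half by (intro powr_mono2 divide_left_mono) auto
  also have "\<dots> \<le> (c0 / p) powr e"
    using e p c0 m_ge_half i_nonneg j_nonneg by (intro powr_mono') (auto simp: divide_le_eq)
  finally show ?thesis by simp
qed

text \<open>If the resonant sets of two distinct same-level denominators q, q' come close along a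
  coordinate z of weight e, then p = |q - q'| approximates z too well: ||p z|| \<le> (c0/p)^e.\<close>

lemma difference_approximates:
  assumes e: "e = i \<or> e = j" "0 < e"
    and q: "q \<in> D (Suc L)" and q': "q' \<in> D (Suc L)" and qq': "\<bar>q'\<bar> \<le> \<bar>q\<bar>" "q \<noteq> q'"
    and near: "dist_int (of_int q * z - g) \<le> (c / \<bar>of_int q\<bar>) powr e"
      "dist_int (of_int q' * z - g') \<le> (c / \<bar>of_int q'\<bar>) powr e"
    and close: "\<bar>g - g'\<bar> \<le> 1 / real N ^ L"
  defines "p \<equiv> real (nat \<bar>q - q'\<bar>)"
  shows "dist_int (p * z) \<le> (c0 / p) powr e"
proof -
  define X where "X = (c0 / p) powr e"
  have "dist_int (p * z) = dist_int ((of_int q - of_int q') * z)"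
  proof (cases "q' \<le> q")
    case False
    hence "p * z = - ((of_int q - of_int q') * z)" unfolding p_def by (simp add: algebra_simps)
    thus ?thesis by (simp only: dist_int_minus)
  qed (simp add: p_def)
  also have "(of_int q - of_int q') * z = (of_int q * z - g) + - (of_int q' * z - g') + (g - g')"
    by (simp add: algebra_simps)
  also have "dist_int \<dots> \<le> dist_int (of_int q * z - g) + dist_int (of_int q' * z - g') + \<bar>g - g'\<bar>"
    using dist_int_add[of "of_int q * z - g + - (of_int q' * z - g')" "g - g'"]
      dist_int_add[of "of_int q * z - g" "- (of_int q' * z - g')"] dist_int_le_abs[of "g - g'"]
    by (simp only: dist_int_minus)
  also have "\<dots> \<le> X / 4 + X / 4 + X / 2"
    using near close resonance_radii_small[OF e q q' qq'] cell_side_small[OF e(1) q qq']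
    unfolding X_def p_def by linarith
  finally show ?thesis unfolding X_def by simp
qed

lemma bad_coordinate:
  assumes "p \<ge> 1"
  obtains b e where "(b \<and> e = i) \<or> (\<not> b \<and> e = j)" "0 < e"
    "dist_int (real p * coord b x) > (c0 / real p) powr e"
proof -
  have c0p: "c0 / real p > 0" using c0 assms by simp
  have "wpow (real p * fst x) i > c0 / real p \<or> wpow (real p * snd x) j > c0 / real p"
    using bad[OF assms] by (simp add: less_max_iff_disj)
  thus ?thesis
  proof
    assume "wpow (real p * fst x) i > c0 / real p"
    from wpow_gt_imp[OF this c0p i_nonneg] show ?thesis using that[of True i] by simp
  next
    assume "wpow (real p * snd x) j > c0 / real p"
    from wpow_gt_imp[OF this c0p j_nonneg] show ?thesis using that[of False j] by simp
  qed
qed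

lemma no_two_resonances:
  assumes q: "q \<in> D (Suc L)" and q': "q' \<in> D (Suc L)" and qq': "\<bar>q'\<bar> \<le> \<bar>q\<bar>" "q \<noteq> q'"
    and meets: "cell N L P \<inter> resonant_set i j x c q \<noteq> {}" "cell N L P \<inter> resonant_set i j x c q' \<noteq> {}"
  shows False
proof -
  obtain \<gamma> \<gamma>' where \<gamma>: "\<gamma> \<in> cell N L P" "\<gamma> \<in> resonant_set i j x c q"
    and \<gamma>': "\<gamma>' \<in> cell N L P" "\<gamma>' \<in> resonant_set i j x c q'" using meets by blast
  define p where "p = nat \<bar>q - q'\<bar>"
  have "p \<ge> 1" using qq'(2) unfolding p_def by simp
  then obtain b e where e: "(b \<and> e = i) \<or> (\<not> b \<and> e = j)" "0 < e"
    and far: "dist_int (real p * coord b x) > (c0 / real p) powr e" by (rule bad_coordinate)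
  have "dist_int (of_int q * coord b x - coord b \<gamma>) \<le> (c / \<bar>of_int q\<bar>) powr e"
    "dist_int (of_int q' * coord b x - coord b \<gamma>') \<le> (c / \<bar>of_int q'\<bar>) powr e"
    using \<gamma>(2) \<gamma>'(2) e(1) unfolding resonant_set_def by auto
  moreover have "\<bar>coord b \<gamma> - coord b \<gamma>'\<bar> \<le> 1 / real N ^ L"
    using \<gamma>(1) \<gamma>'(1) unfolding cell_def by (cases b) (auto intro: adic_interval_width)
  moreover have "e = i \<or> e = j" using e(1) by blast
  ultimately have "dist_int (real p * coord b x) \<le> (c0 / real p) powr e"
    using difference_approximates[OF _ e(2) q q' qq'] unfolding p_def by blast
  thus False using far by simp
qed

lemma unique_level_denominator:
  assumes q: "q \<in> D (Suc L)" and q': "q' \<in> D (Suc L)"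
    and meets: "cell N L P \<inter> resonant_set i j x c q \<noteq> {}" "cell N L P \<inter> resonant_set i j x c q' \<noteq> {}"
  shows "q = q'"
proof (rule ccontr)
  assume "q \<noteq> q'"
  show False
  proof (cases "\<bar>q'\<bar> \<le> \<bar>q\<bar>")
    case True
    show False by (rule no_two_resonances[OF q q' True \<open>q \<noteq> q'\<close> meets])
  next
    case False
    show False by (rule no_two_resonances[OF q' q _ _ meets(2,1)]) (use False \<open>q \<noteq> q'\<close> in auto)
  qed
qed

text \<open>The resonant set of a level-(L+1) denominator is thin in its dominant coordinate, so it
  meets at most 3N of the N^2 children of any cell.\<close>

lemma resonant_children_card:
  assumes q: "q \<in> D (Suc L)" and P: "P \<in> grid N L"
  shows "card {Q \<in> children N P. cell N (Suc L) Q \<inter> resonant_set i j x c q \<noteq> {}} \<le> 3 * N"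
proof -
  define r where "r = (c / \<bar>of_int q\<bar>) powr m"
  have r: "0 \<le> r" "r \<le> 1 / (2 * real N ^ Suc L)" using q unfolding level_denominators_def r_def by auto
  define b where "b = (i \<ge> j)"
  have b: "(b \<and> m = i) \<or> (\<not> b \<and> m = j)" unfolding b_def by auto
  define S where "S = {a. a < N ^ Suc L \<and>
      (\<exists>y\<in>adic_interval N (Suc L) a. dist_int (of_int q * coord b x - y) \<le> r)}"
  have "{Q \<in> children N P. cell N (Suc L) Q \<inter> resonant_set i j x c q \<noteq> {}}
      \<subseteq> {Q \<in> children N P. coord b Q \<in> S}"
  proof safe
    fix Q \<gamma> assume Q: "Q \<in> children N P" and \<gamma>: "\<gamma> \<in> cell N (Suc L) Q" "\<gamma> \<in> resonant_set i j x c q"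
    have "coord b Q < N ^ Suc L"
      using children_grid[OF P] Q unfolding grid_def by (cases b) (auto simp: mem_Times_iff)
    moreover have "coord b \<gamma> \<in> adic_interval N (Suc L) (coord b Q)"
      using \<gamma>(1) unfolding cell_def by (cases b) auto
    moreover have "dist_int (of_int q * coord b x - coord b \<gamma>) \<le> r"
      using \<gamma>(2) b unfolding resonant_set_def r_def by auto
    ultimately show "coord b Q \<in> S" unfolding S_def by blast
  qed
  hence "card {Q \<in> children N P. cell N (Suc L) Q \<inter> resonant_set i j x c q \<noteq> {}}
      \<le> card {Q \<in> children N P. coord b Q \<in> S}" by (intro card_mono) (simp_all add: finite_children)
  also have "\<dots> \<le> N * card S" by (rule children_coordinate_card) (simp add: S_def)
  also have "\<dots> \<le> N * 3"
    using adic_intervals_near_mod1_card[OF _ r] N_ge_2 unfolding S_def by (intro mult_left_mono) auto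
  finally show ?thesis by simp
qed

lemma good_children_card:
  assumes P: "P \<in> grid N L"
  shows "N * N - 3 * N \<le> card (good_children N (avoids_resonances i j x c N) (Suc L) P)"
proof -
  define B where "B = {Q \<in> children N P. \<not> avoids_resonances i j x c N (Suc L) Q}"
  have B_card: "card B \<le> 3 * N"
  proof (cases "B = {}")
    case False
    then obtain Q0 q0 where Q0: "Q0 \<in> children N P" and q0: "q0 \<in> D (Suc L)"
      "cell N (Suc L) Q0 \<inter> resonant_set i j x c q0 \<noteq> {}"
      unfolding B_def avoids_resonances_def by blast
    have in_parent: "cell N (Suc L) Q \<subseteq> cell N L P" if "Q \<in> children N P" for Q
      using cell_ancestor_subset[of N L 1 Q] ancestor_children[OF _ that] N_ge_2 by simp
    have "B \<subseteq> {Q \<in> children N P. cell N (Suc L) Q \<inter> resonant_set i j x c q0 \<noteq> {}}"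
    proof
      fix Q assume "Q \<in> B"
      then obtain q where Q: "Q \<in> children N P" and q: "q \<in> D (Suc L)"
        "cell N (Suc L) Q \<inter> resonant_set i j x c q \<noteq> {}"
        unfolding B_def avoids_resonances_def by blast
      have "q = q0" using unique_level_denominator[OF q(1) q0(1)] q(2) q0(2) in_parent[OF Q] in_parent[OF Q0] by blast
      thus "Q \<in> {Q \<in> children N P. cell N (Suc L) Q \<inter> resonant_set i j x c q0 \<noteq> {}}" using Q q by simp
    qed
    hence "card B \<le> card {Q \<in> children N P. cell N (Suc L) Q \<inter> resonant_set i j x c q0 \<noteq> {}}"
      by (intro card_mono) (simp_all add: finite_children)
    thus ?thesis using resonant_children_card[OF q0(1) P] by linarith
  qed simp
  have "good_children N (avoids_resonances i j x c N) (Suc L) P = children N P - B"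
    unfolding good_children_def B_def by auto
  moreover have "card (children N P - B) = N * N - card B"
    using card_Diff_subset[of B "children N P"] finite_children card_children unfolding B_def
    by (metis (no_types, lifting) mem_Collect_eq rev_finite_subset subsetI)
  ultimately show ?thesis using B_card by simp
qed

lemma denominator_level:
  assumes q: "q \<noteq> 0"
  obtains L where "q \<in> D (Suc L)"
proof -
  define r where "r = (c / \<bar>of_int q\<bar>) powr m"
  have r: "0 < 2 * real N * r" unfolding r_def using c_pos q N_ge_2 by simp
  have "c / \<bar>of_int q\<bar> \<le> c" using c_pos q by (simp add: divide_le_eq abs_if)
  hence "r \<le> c powr m" unfolding r_def using c_pos m_ge_half by (intro powr_mono2) auto
  hence "2 * real N * r \<le> 2 * real N * c powr m" using N_ge_2 by (intro mult_left_mono) auto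
  also have "\<dots> \<le> 1" using c_small N_ge_2 by (simp add: field_simps)
  finally have "2 * real N * r \<le> 1" .
  then obtain L where L: "1 / real N ^ Suc L < 2 * real N * r" "2 * real N * r \<le> 1 / real N ^ L"
    using geometric_bracket[of "real N" "2 * real N * r"] r N_ge_2 by auto
  have "1 / (2 * real N ^ Suc (Suc L)) < r" "r \<le> 1 / (2 * real N ^ Suc L)"
    using L N_ge_2 by (simp_all add: field_simps)
  thus ?thesis using that[of L] q unfolding level_denominators_def r_def by simp
qed

lemma is_cantor_construction:
  assumes "N \<ge> 4"
  shows "cantor_construction N (N * N - 3 * N) (avoids_resonances i j x c N)"
proof
  show "2 \<le> N" using assms by simp
  have "4 * N \<le> N * N" using assms by simp
  thus "1 \<le> N * N - 3 * N" using assms by linarith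
  show "N * N - 3 * N \<le> card (good_children N (avoids_resonances i j x c N) (Suc L) P)"
    if "P \<in> grid N L" for L P by (rule good_children_card[OF that])
qed

lemma limit_set_subset_Bad_inhom:
  assumes "N \<ge> 4"
  shows "cantor_construction.limit_set N (N * N - 3 * N) (avoids_resonances i j x c N) \<subseteq> Bad_inhom x i j"
proof
  interpret cantor_construction N "N * N - 3 * N" "avoids_resonances i j x c N"
    by (rule is_cantor_construction[OF assms])
  fix \<gamma> assume \<gamma>: "\<gamma> \<in> limit_set"
  have "max (wpow (of_int q * fst x - fst \<gamma>) i) (wpow (of_int q * snd x - snd \<gamma>) j) > c / \<bar>of_int q\<bar>"
    if q: "q \<noteq> 0" for q
  proof (rule outside_resonant_set[OF i_nonneg j_nonneg c_pos q])
    obtain L where L: "q \<in> D (Suc L)" using denominator_level[OF q] by blast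
    obtain Q where Q: "Q \<in> survivors (Suc L)" "\<gamma> \<in> cell N (Suc L) Q"
      using \<gamma> unfolding limit_set_def by blast
    have "cell N (Suc L) Q \<inter> resonant_set i j x c q = {}"
      using survivor_good[OF Q(1)] L unfolding avoids_resonances_def by simp
    thus "\<gamma> \<notin> resonant_set i j x c q" using Q(2) by blast
  qed
  moreover have "\<gamma> \<in> unit_square" using \<gamma> limit_set_subset by blast
  ultimately show "\<gamma> \<in> Bad_inhom x i j" using c_pos unfolding Bad_inhom_def by auto
qed

end

lemma small_argument_powr:
  fixes K b e :: real
  assumes "e > 0" "b > 0" "K > 0"
  shows "\<exists>\<delta>>0. \<forall>t. 0 < t \<and> t \<le> \<delta> \<longrightarrow> (K * t) powr e \<le> b"
proof (intro exI conjI allI impI)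
  show "b powr (1 / e) / K > 0" using assms by simp
  fix t assume t: "0 < t \<and> t \<le> b powr (1 / e) / K"
  hence "K * t \<le> b powr (1 / e)" using assms by (simp add: field_simps)
  hence "(K * t) powr e \<le> (b powr (1 / e)) powr e" using assms t by (intro powr_mono2) auto
  thus "(K * t) powr e \<le> b" using assms by (simp add: powr_powr)
qed

lemma choose_constant:
  fixes i j c0 :: real and N :: nat
  assumes i: "i \<ge> 0" and j: "j \<ge> 0" and ij: "i + j = 1" and c0: "c0 > 0" and N: "N \<ge> 2"
  obtains c where "c > 0" "c powr (max i j) \<le> 1 / (2 * real N)"
    "i > 0 \<Longrightarrow> (2 * real N ^ 2 * c / c0) powr i \<le> 1 / 4"
    "j > 0 \<Longrightarrow> (2 * real N ^ 2 * c / c0) powr j \<le> 1 / 4"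
    "(c0 / (2 * c)) powr (max i j) \<ge> 4 * real N ^ 2"
proof -
  define m where "m = max i j"
  have m: "m > 0" using i j ij unfolding m_def by linarith
  have small: "\<exists>\<delta>>0. \<forall>t. 0 < t \<and> t \<le> \<delta> \<longrightarrow> (e > 0 \<longrightarrow> (K * t) powr e \<le> b)"
    if "e \<ge> 0" "b > 0" "K > 0" for e b K :: real
    using small_argument_powr[of e b K] that by (cases "e = 0") auto
  obtain \<delta>1 where \<delta>1: "\<delta>1 > 0" "\<And>t. 0 < t \<Longrightarrow> t \<le> \<delta>1 \<Longrightarrow> (1 * t) powr m \<le> 1 / (2 * real N)"
    using small[of m "1 / (2 * real N)" 1] m N by auto
  obtain \<delta>2 where \<delta>2: "\<delta>2 > 0"
    "\<And>t. 0 < t \<Longrightarrow> t \<le> \<delta>2 \<Longrightarrow> i > 0 \<Longrightarrow> (2 * real N ^ 2 / c0 * t) powr i \<le> 1 / 4"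
    using small[of i "1 / 4" "2 * real N ^ 2 / c0"] i c0 N by auto
  obtain \<delta>3 where \<delta>3: "\<delta>3 > 0"
    "\<And>t. 0 < t \<Longrightarrow> t \<le> \<delta>3 \<Longrightarrow> j > 0 \<Longrightarrow> (2 * real N ^ 2 / c0 * t) powr j \<le> 1 / 4"
    using small[of j "1 / 4" "2 * real N ^ 2 / c0"] j c0 N by auto
  obtain \<delta>4 where \<delta>4: "\<delta>4 > 0" "\<And>t. 0 < t \<Longrightarrow> t \<le> \<delta>4 \<Longrightarrow> (2 / c0 * t) powr m \<le> 1 / (4 * real N ^ 2)"
    using small[of m "1 / (4 * real N ^ 2)" "2 / c0"] m c0 N by auto
  define c where "c = min (min \<delta>1 \<delta>2) (min \<delta>3 \<delta>4)"
  have c: "c > 0" "c \<le> \<delta>1" "c \<le> \<delta>2" "c \<le> \<delta>3" "c \<le> \<delta>4" using \<delta>1 \<delta>2 \<delta>3 \<delta>4 by (auto simp: c_def)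
  show ?thesis
  proof (rule that[OF c(1)])
    show "c powr max i j \<le> 1 / (2 * real N)" using \<delta>1(2)[OF c(1,2)] by (simp add: m_def)
    show "(2 * real N ^ 2 * c / c0) powr i \<le> 1 / 4" if "i > 0" using \<delta>2(2)[OF c(1,3) that] by simp
    show "(2 * real N ^ 2 * c / c0) powr j \<le> 1 / 4" if "j > 0" using \<delta>3(2)[OF c(1,4) that] by simp
    have pos: "0 < (2 / c0 * c) powr m" using c c0 by simp
    have "4 * real N ^ 2 \<le> 1 / (2 / c0 * c) powr m"
      using \<delta>4(2)[OF c(1,5)] pos N by (simp add: field_simps)
    also have "\<dots> = (c0 / (2 * c)) powr m" using c c0 by (simp add: powr_divide)
    finally show "4 * real N ^ 2 \<le> (c0 / (2 * c)) powr max i j" by (simp add: m_def)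
  qed
qed

lemma choose_base:
  fixes s :: real
  assumes "0 < s" "s < 2"
  obtains N :: nat where "N \<ge> 4" "real N powr s \<le> real (N * N - 3 * N)"
proof
  define N where "N = nat \<lceil>4 powr (1 / (2 - s))\<rceil> + 4"
  show N4: "N \<ge> 4" unfolding N_def by simp
  have "4 = (4 powr (1 / (2 - s))) powr (2 - s)" using assms by (simp add: powr_powr)
  also have "\<dots> \<le> real N powr (2 - s)"
  proof (rule powr_mono2)
    show "4 powr (1 / (2 - s)) \<le> real N" unfolding N_def by linarith
  qed (use assms in auto)
  finally have "real N powr s * 4 \<le> real N powr s * real N powr (2 - s)"
    by (intro mult_left_mono) auto
  also have "\<dots> = real N * real N" using N4 by (simp add: powr_add[symmetric] power2_eq_square)
  finally have "real N powr s \<le> real N * real N / 4" by simp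
  also have "\<dots> \<le> real N * real N - 3 * real N" using N4 by simp
  also have "\<dots> = real (N * N - 3 * N)" using N4 mult_le_mono1[of 3 N N] by (simp add: of_nat_diff)
  finally show "real N powr s \<le> real (N * N - 3 * N)" .
qed

lemma Bad_inhom_contains_cantor_set:
  assumes i: "i \<ge> 0" and j: "j \<ge> 0" and ij: "i + j = 1" and x: "x \<in> Bad i j" and N: "N \<ge> 4"
  obtains G where "cantor_construction N (N * N - 3 * N) G"
    "cantor_construction.limit_set N (N * N - 3 * N) G \<subseteq> Bad_inhom x i j"
proof -
  obtain c0' where c0': "c0' > 0"
    and bad: "\<forall>q::nat. q \<ge> 1 \<longrightarrow> max (wpow (real q * fst x) i) (wpow (real q * snd x) j) > c0' / real q"
    using x unfolding Bad_def by blast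
  define c0 where "c0 = min c0' 1"
  have c0: "c0 > 0" "c0 \<le> 1" using c0' by (auto simp: c0_def)
  have bad_c0: "max (wpow (real p * fst x) i) (wpow (real p * snd x) j) > c0 / real p" if "p \<ge> 1" for p :: nat
  proof -
    have "c0 / real p \<le> c0' / real p" unfolding c0_def using that by (intro divide_right_mono) auto
    thus ?thesis using bad that by fastforce
  qed
  obtain c where c: "c > 0" "c powr (max i j) \<le> 1 / (2 * real N)"
    "i > 0 \<Longrightarrow> (2 * real N ^ 2 * c / c0) powr i \<le> 1 / 4"
    "j > 0 \<Longrightarrow> (2 * real N ^ 2 * c / c0) powr j \<le> 1 / 4"
    "(c0 / (2 * c)) powr (max i j) \<ge> 4 * real N ^ 2"
    using choose_constant[OF i j ij c0(1), of N] N by auto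
  interpret resonance_setting i j x c0 c N
    using i j ij c0 bad_c0 N c by unfold_locales auto
  show ?thesis using that is_cantor_construction[OF N] limit_set_subset_Bad_inhom[OF N] by blast
qed

lemma Bad_inhom_hausdorff_measure_positive:
  assumes i: "i \<ge> 0" and j: "j \<ge> 0" and ij: "i + j = 1" and x: "x \<in> Bad i j"
    and s: "0 \<le> s" "s < 2"
  shows "hausdorff_measure s (Bad_inhom x i j) \<noteq> 0"
proof (cases "s = 0")
  case True
  obtain G where G: "cantor_construction 4 (4 * 4 - 3 * 4) G"
    "cantor_construction.limit_set 4 (4 * 4 - 3 * 4) G \<subseteq> Bad_inhom x i j"
    using Bad_inhom_contains_cantor_set[OF i j ij x, of 4] by auto
  obtain \<gamma> where "\<gamma> \<in> Bad_inhom x i j"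
    using cantor_construction.limit_set_nonempty[OF G(1)] G(2) by blast
  thus ?thesis using True hausdorff_measure_0_nonempty by blast
next
  case False
  obtain N where N: "N \<ge> 4" "real N powr s \<le> real (N * N - 3 * N)"
    using choose_base[of s] s False by auto
  obtain G where G: "cantor_construction N (N * N - 3 * N) G"
    "cantor_construction.limit_set N (N * N - 3 * N) G \<subseteq> Bad_inhom x i j"
    using Bad_inhom_contains_cantor_set[OF i j ij x N(1)] by blast
  show ?thesis using cantor_construction.hausdorff_measure_positive[OF G(1) _ _ N(2) G(2)] s False by simp
qed

theorem theorem2p2:
  fixes i j :: real and x :: "real \<times> real"
  assumes "i \<ge> 0" and "j \<ge> 0" and "i + j = 1"
    and "x \<in> Bad i j"
  shows "hausdorff_dim (Bad_inhom x i j) = 2"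
proof -
  have "Bad_inhom x i j \<subseteq> unit_square" unfolding Bad_inhom_def by blast
  hence "hausdorff_dim (Bad_inhom x i j) = ereal 2"
    using Bad_inhom_hausdorff_measure_positive[OF assms] hausdorff_measure_above_2
    by (intro hausdorff_dim_eqI) auto
  thus ?thesis by simp
qed

end
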